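(* Let $k\ge 4$ be even and let $G$ be the $k$-uniform sunflower, with Laplacian tensor $\mathcal L$. Then $G$ is odd-bipartite, and $\lambda(\mathcal L)$ is the unique root in the interval $(2,4)$ of the equation $(\mu-2)-\left(\frac{1}{\mu-1}\right)^{\frac{1}{k-1}}-\left(\frac{1}{\mu-1}\right)^{k-1}=0$.
   Context: A $k$-uniform hypergraph $G=(V,E)$ ($k\ge 3$) is a simple undirected hypergraph with vertex set $V=[n]$ and a nonempty edge set $E$ of $k$-element subsets of $V$; $d_i$ denotes the number of edges containing vertex $i$. The $k$-uniform sunflower has vertex set $\{i_{j,s}: j\in[k-1], s\in[k]\}\cup\{i_k\}$ (all distinct) and edges $\{i_{j,1},\ldots,i_{j,k}\}$ for $j\in[k-1]$ together with $\{i_{1,1},i_{2,1},\ldots,i_{k-1,1},i_k\}$. The Laplacian tensor is $\mathcal L=\mathcal D-\mathcal A$, where $\mathcal A$ is the order-$k$ dimension-$n$ tensor with $a_{i_1\ldots i_k}=\frac1{(k-1)!}$ if $\{i_1,\ldots,i_k\}\in E$ and $0$ otherwise, and $\mathcal D$ is diagonal with $d_{i\ldots i}=d_i$; thus $(\mathcal L\mathbf x^{k-1})_i=d_ix_i^{k-1}-\sum_{e\in E,\,i\in e}\prod_{s\in e\setminus\{i\}}x_s$. A real $\lambda$ is an H-eigenvalue of $\mathcal L$ if some $\mathbf x\in\mathbb R^n\setminus\{0\}$ satisfies $(\mathcal L\mathbf x^{k-1})_i=\lambda x_i^{k-1}$ for all $i$; $\lambda(\mathcal L)$ is the largest H-eigenvalue.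 For even $k$, $G$ is odd-bipartite if $V$ can be partitioned into two nonempty disjoint sets $V_1,V_2$ such that every edge meets $V_1$ in an odd number of vertices. *)

theory Defs
  imports "HOL-Analysis.Analysis"
begin

text \<open>Hypergraphs on vertex set [n] = {1..n}; edges are sets of vertices.
  Order-k tensors of dimension n are functions on index lists (length k, entries in [n]).\<close>

definition hdeg :: "nat set set \<Rightarrow> nat \<Rightarrow> nat" where
  "hdeg E i = card {e \<in> E. i \<in> e}"

definition adj_tensor :: "nat \<Rightarrow> nat set set \<Rightarrow> nat list \<Rightarrow> real" where
  "adj_tensor k E is = (if set is \<in> E then 1 / fact (k - 1) else 0)"

definition deg_tensor :: "nat \<Rightarrow> nat set set \<Rightarrow> nat list \<Rightarrow> real" where
  "deg_tensor k E is = (if is \<noteq> [] \<and> is = replicate k (hd is) then real (hdeg E (hd is)) else 0)"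

definition lap_tensor :: "nat \<Rightarrow> nat set set \<Rightarrow> nat list \<Rightarrow> real" where
  "lap_tensor k E is = deg_tensor k E is - adj_tensor k E is"

definition tensor_apply :: "nat \<Rightarrow> nat \<Rightarrow> (nat list \<Rightarrow> real) \<Rightarrow> (nat \<Rightarrow> real) \<Rightarrow> nat \<Rightarrow> real" where
  "tensor_apply n k T x i =
     (\<Sum>is \<in> {is. set is \<subseteq> {1..n} \<and> length is = k - 1}. T (i # is) * prod_list (map x is))"

definition H_eigenvalue :: "nat \<Rightarrow> nat \<Rightarrow> (nat list \<Rightarrow> real) \<Rightarrow> real \<Rightarrow> bool" where
  "H_eigenvalue n k T lam \<longleftrightarrow>
     (\<exists>x :: nat \<Rightarrow> real. (\<exists>i \<in> {1..n}. x i \<noteq> 0) \<and>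
        (\<forall>i \<in> {1..n}. tensor_apply n k T x i = lam * x i ^ (k - 1)))"

definition is_largest_H_eigenvalue :: "nat \<Rightarrow> nat \<Rightarrow> (nat list \<Rightarrow> real) \<Rightarrow> real \<Rightarrow> bool" where
  "is_largest_H_eigenvalue n k T lam \<longleftrightarrow>
     H_eigenvalue n k T lam \<and> (\<forall>mu. H_eigenvalue n k T mu \<longrightarrow> mu \<le> lam)"

definition odd_bipartite :: "nat \<Rightarrow> nat set set \<Rightarrow> bool" where
  "odd_bipartite n E \<longleftrightarrow>
     (\<exists>V1 V2. V1 \<noteq> {} \<and> V2 \<noteq> {} \<and> V1 \<inter> V2 = {} \<and> V1 \<union> V2 = {1..n} \<and>
        (\<forall>e \<in> E. odd (card (e \<inter> V1))))"

text \<open>k-uniform sunflower: i_{j,s} = (j-1)k + s (j in [k-1], s in [k]), i_k = (k-1)k+1.\<close>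
definition sunflower_n :: "nat \<Rightarrow> nat" where
  "sunflower_n k = (k - 1) * k + 1"

definition sunflower_edges :: "nat \<Rightarrow> nat set set" where
  "sunflower_edges k =
     {{(j - 1) * k + s | s. s \<in> {1..k}} | j. j \<in> {1..k - 1}} \<union>
     {insert (sunflower_n k) {(j - 1) * k + 1 | j. j \<in> {1..k - 1}}}"

end

theory Submission
  imports Defs
begin

text \<open>For even \<open>k\<close> and an odd-bipartite hypergraph, let \<open>u\<close> be a positive H-eigenvector of the
  signless Laplacian \<open>D + A\<close> with eigenvalue \<open>mu\<close>. Negating \<open>u\<close> on the odd side of the
  bipartition makes every edge product negative, which turns it into an H-eigenvector of
  \<open>L = D - A\<close> for the same \<open>mu\<close>. Conversely, for any H-eigenpair \<open>(lam, x)\<close> of \<open>L\<close>, AM-GM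
  on each edge with the weights \<open>\<bar>x i\<bar> / u i\<close>, regrouped by vertices via the eigen-equation
  of \<open>u\<close>, gives \<open>lam \<le> mu\<close>. For the sunflower, with \<open>t = mu - 1\<close> and
  \<open>s = (1 / t) powr (1 / (k - 1))\<close>, the vector equal to \<open>t\<close> on the petal bases, \<open>t s\<close> on the extra
  vertex and \<open>1\<close> elsewhere satisfies the signless eigen-equation whenever \<open>mu\<close> solves the
  given equation; its left-hand side is increasing for \<open>mu > 1\<close> and changes sign on \<open>[2, 4]\<close>.\<close>

definition uniform_hypergraph :: "nat \<Rightarrow> nat \<Rightarrow> nat set set \<Rightarrow> bool" where
  "uniform_hypergraph n k E \<longleftrightarrow> finite E \<and> (\<forall>e\<in>E. e \<subseteq> {1..n} \<and> card e = k)"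

lemma uniform_hypergraph_edgeD:
  assumes "uniform_hypergraph n k E" "e \<in> E"
  shows "e \<subseteq> {1..n}" "card e = k" "finite e"
  using assms finite_subset[of e "{1..n}"] by (auto simp: uniform_hypergraph_def)

lemma sum_prod_list_distinct_lists:
  fixes x :: "'a \<Rightarrow> 'b::{comm_semiring_1,semiring_char_0}"
  assumes "finite A"
  shows "(\<Sum>ys | length ys = card A \<and> distinct ys \<and> set ys \<subseteq> A. prod_list (map x ys))
         = fact (card A) * prod x A"
proof -
  let ?L = "{ys. length ys = card A \<and> distinct ys \<and> set ys \<subseteq> A}"
  have "prod_list (map x ys) = prod x A" if "ys \<in> ?L" for ys
  proof -
    have "set ys = A"
      using that card_subset_eq[OF assms, of "set ys"] by (simp add: distinct_card)
    with that show ?thesis by (metis (mono_tags) mem_Collect_eq prod.distinct_set_conv_list)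
  qed
  moreover have "card ?L = fact (card A)"
    using card_lists_distinct_length_eq[OF assms order.refl] by (simp add: fact_prod)
  ultimately show ?thesis by (simp add: of_nat_fact)
qed

lemma lists_completing_edge:
  assumes "finite e" "i \<in> e"
  shows "{ys. length ys = card e - 1 \<and> set (i # ys) = e}
       = {ys. length ys = card (e - {i}) \<and> distinct ys \<and> set ys \<subseteq> e - {i}}"
proof (intro set_eqI iffI)
  fix ys assume "ys \<in> {ys. length ys = card e - 1 \<and> set (i # ys) = e}"
  hence len: "length ys = card e - 1" and e: "set (i # ys) = e" by auto
  have "card (set (i # ys)) = length (i # ys)"
    using assms e len by (metis card_gt_0_iff empty_iff length_Cons Suc_pred')
  hence "distinct (i # ys)" by (rule card_distinct)
  with assms e len show "ys \<in> {ys. length ys = card (e - {i}) \<and> distinct ys \<and> set ys \<subseteq> e - {i}}"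
    by auto
next
  fix ys assume "ys \<in> {ys. length ys = card (e - {i}) \<and> distinct ys \<and> set ys \<subseteq> e - {i}}"
  hence len: "length ys = card (e - {i})" and "distinct ys" and sub: "set ys \<subseteq> e - {i}"
    by auto
  hence "set ys = e - {i}"
    using assms card_subset_eq[of "e - {i}" "set ys"] by (simp add: distinct_card)
  with assms len show "ys \<in> {ys. length ys = card e - 1 \<and> set (i # ys) = e}"
    by auto
qed

lemma tensor_apply_deg_tensor:
  assumes "k \<ge> 1" "i \<in> {1..n}"
  shows "tensor_apply n k (deg_tensor k E) x i = real (hdeg E i) * x i ^ (k - 1)"
proof -
  define S where "S = {ys. set ys \<subseteq> {1..n} \<and> length ys = k - 1}"
  define r where "r = replicate (k - 1) i"
  have "replicate k i = i # r"
    using assms by (cases k) (auto simp: r_def)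
  hence "tensor_apply n k (deg_tensor k E) x i
      = (\<Sum>ys\<in>S. if ys = r then real (hdeg E i) * prod_list (map x r) else 0)"
    unfolding tensor_apply_def S_def by (intro sum.cong) (auto simp: deg_tensor_def)
  also have "\<dots> = real (hdeg E i) * prod_list (map x r)"
    using assms by (auto simp: S_def r_def finite_lists_length_eq set_replicate_conv_if)
  finally show ?thesis by (simp add: r_def)
qed

lemma tensor_apply_adj_tensor:
  assumes E: "uniform_hypergraph n k E" and i: "i \<in> {1..n}"
  shows "tensor_apply n k (adj_tensor k E) x i = (\<Sum>e | e \<in> E \<and> i \<in> e. \<Prod>j\<in>e - {i}. x j)"
proof -
  define S where "S = {ys. set ys \<subseteq> {1..n} \<and> length ys = k - 1}"
  define Ei where "Ei = {e \<in> E. i \<in> e}"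
  define P where "P ys = prod_list (map x ys)" for ys
  have fin: "finite S" "finite Ei"
    using E unfolding S_def Ei_def uniform_hypergraph_def by (auto intro: finite_lists_length_eq)
  have edge_lists: "{ys \<in> {ys \<in> S. set (i # ys) \<in> Ei}. set (i # ys) = e}
      = {ys. length ys = card (e - {i}) \<and> distinct ys \<and> set ys \<subseteq> e - {i}}" if "e \<in> Ei" for e
  proof -
    have "e \<subseteq> {1..n}" "card e = k" "finite e" "i \<in> e"
      using that uniform_hypergraph_edgeD[OF E] by (auto simp: Ei_def)
    with lists_completing_edge[of e i, symmetric] that show ?thesis
      by (auto simp: S_def)
  qed
  have "tensor_apply n k (adj_tensor k E) x i
      = (\<Sum>ys\<in>S. if set (i # ys) \<in> Ei then P ys / fact (k - 1) else 0)"
    unfolding tensor_apply_def adj_tensor_def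
    by (intro sum.cong) (auto simp: S_def Ei_def P_def)
  also have "\<dots> = (\<Sum>ys | ys \<in> S \<and> set (i # ys) \<in> Ei. P ys / fact (k - 1))"
    using fin(1) by (rule sum.inter_filter[symmetric])
  also have "\<dots> = (\<Sum>ys | ys \<in> S \<and> set (i # ys) \<in> Ei. P ys) / fact (k - 1)"
    by (rule sum_divide_distrib[symmetric])
  also have "(\<Sum>ys | ys \<in> S \<and> set (i # ys) \<in> Ei. P ys)
      = (\<Sum>e\<in>Ei. \<Sum>ys \<in> {ys \<in> {ys \<in> S. set (i # ys) \<in> Ei}. set (i # ys) = e}. P ys)"
    using fin by (intro sum.group[symmetric]) auto
  also have "\<dots> = (\<Sum>e\<in>Ei. fact (k - 1) * (\<Prod>j\<in>e - {i}. x j))"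
  proof (rule sum.cong[OF refl])
    fix e assume e: "e \<in> Ei"
    hence "card (e - {i}) = k - 1" "finite (e - {i})"
      using uniform_hypergraph_edgeD[OF E] by (auto simp: Ei_def)
    with sum_prod_list_distinct_lists[of "e - {i}" x]
    show "(\<Sum>ys \<in> {ys \<in> {ys \<in> S. set (i # ys) \<in> Ei}. set (i # ys) = e}. P ys)
        = fact (k - 1) * (\<Prod>j\<in>e - {i}. x j)"
      unfolding edge_lists[OF e] P_def by simp
  qed
  finally show ?thesis
    by (simp add: Ei_def sum_distrib_left[symmetric])
qed

lemma tensor_apply_lap_tensor:
  assumes "uniform_hypergraph n k E" "k \<ge> 1" "i \<in> {1..n}"
  shows "tensor_apply n k (lap_tensor k E) x i
       = real (hdeg E i) * x i ^ (k - 1) - (\<Sum>e | e \<in> E \<and> i \<in> e. \<Prod>j\<in>e - {i}. x j)"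
proof -
  have "tensor_apply n k (lap_tensor k E) x i
      = tensor_apply n k (deg_tensor k E) x i - tensor_apply n k (adj_tensor k E) x i"
    unfolding tensor_apply_def lap_tensor_def by (simp add: left_diff_distrib sum_subtractf)
  with assms show ?thesis
    by (simp add: tensor_apply_deg_tensor tensor_apply_adj_tensor)
qed

lemma mult_tensor_apply_lap_tensor:
  assumes E: "uniform_hypergraph n k E" and "k \<ge> 1" "i \<in> {1..n}"
  shows "x i * tensor_apply n k (lap_tensor k E) x i
       = real (hdeg E i) * x i ^ k - (\<Sum>e | e \<in> E \<and> i \<in> e. \<Prod>j\<in>e. x j)"
proof -
  have "x i * (\<Prod>j\<in>e - {i}. x j) = (\<Prod>j\<in>e. x j)" if "e \<in> E" "i \<in> e" for e
    using that uniform_hypergraph_edgeD(3)[OF E] by (simp add: prod.remove)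
  moreover have "x i * x i ^ (k - 1) = x i ^ k"
    using assms(2) by (simp add: power_eq_if)
  ultimately show ?thesis
    using assms by (simp add: tensor_apply_lap_tensor right_diff_distrib sum_distrib_left mult.assoc)
qed

lemma sum_incident_edges_swap:
  assumes "uniform_hypergraph n k E"
  shows "(\<Sum>i\<in>{1..n}. \<Sum>e | e \<in> E \<and> i \<in> e. f i e) = (\<Sum>e\<in>E. \<Sum>i\<in>e. f i e)"
proof -
  have "(\<Sum>i\<in>{1..n}. \<Sum>e | e \<in> E \<and> i \<in> e. f i e) = (\<Sum>e\<in>E. \<Sum>i | i \<in> {1..n} \<and> i \<in> e. f i e)"
    using assms by (intro sum.swap_restrict) (auto simp: uniform_hypergraph_def)
  also have "\<dots> = (\<Sum>e\<in>E. \<Sum>i\<in>e. f i e)"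
    using uniform_hypergraph_edgeD(1)[OF assms]
    by (intro sum.cong refl) (metis Collect_mem_eq inf_absorb2 Int_def)
  finally show ?thesis .
qed

lemma lap_eigenpair_energy:
  assumes E: "uniform_hypergraph n k E" and k: "k \<ge> 1"
    and eig: "\<And>i. i \<in> {1..n} \<Longrightarrow> tensor_apply n k (lap_tensor k E) x i = lam * x i ^ (k - 1)"
  shows "(\<Sum>i\<in>{1..n}. real (hdeg E i) * x i ^ k) - real k * (\<Sum>e\<in>E. \<Prod>j\<in>e. x j)
       = lam * (\<Sum>i\<in>{1..n}. x i ^ k)"
proof -
  have "x i * x i ^ (k - 1) = x i ^ k" for i
    using k by (simp add: power_eq_if)
  hence "real (hdeg E i) * x i ^ k - (\<Sum>e | e \<in> E \<and> i \<in> e. \<Prod>j\<in>e. x j) = lam * x i ^ k"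
    if "i \<in> {1..n}" for i
    using mult_tensor_apply_lap_tensor[OF E k that, of x] eig[OF that] by (simp add: ac_simps)
  hence "(\<Sum>i\<in>{1..n}. real (hdeg E i) * x i ^ k) - (\<Sum>i\<in>{1..n}. \<Sum>e | e \<in> E \<and> i \<in> e. \<Prod>j\<in>e. x j)
      = lam * (\<Sum>i\<in>{1..n}. x i ^ k)"
    by (simp add: sum_subtractf[symmetric] sum_distrib_left)
  moreover have "(\<Sum>i\<in>{1..n}. \<Sum>e | e \<in> E \<and> i \<in> e. \<Prod>j\<in>e. x j)
      = (\<Sum>e\<in>E. \<Sum>i\<in>e. \<Prod>j\<in>e. x j)"
    by (rule sum_incident_edges_swap[OF E])
  moreover have "\<dots> = real k * (\<Sum>e\<in>E. \<Prod>j\<in>e. x j)"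
    using uniform_hypergraph_edgeD(2)[OF E] by (simp add: sum_distrib_left)
  ultimately show ?thesis
    by simp
qed

lemma card_mult_prod_le_sum_power:
  fixes a :: "'a \<Rightarrow> real"
  assumes "finite S" "\<And>i. i \<in> S \<Longrightarrow> a i \<ge> 0"
  shows "real (card S) * (\<Prod>i\<in>S. a i) \<le> (\<Sum>i\<in>S. a i ^ card S)"
proof (cases "S = {}")
  case False
  have P: "(\<Prod>i\<in>S. a i) \<ge> 0"
    using assms by (simp add: prod_nonneg)
  have "(\<Prod>i\<in>S. a i) = ((\<Prod>i\<in>S. a i) ^ card S) powr (1 / card S)"
  proof (cases "(\<Prod>i\<in>S. a i) = 0")
    case False
    with P have pos: "(\<Prod>i\<in>S. a i) > 0" by simp
    have c: "real (card S) > 0"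
      using \<open>S \<noteq> {}\<close> assms(1) by (simp add: card_gt_0_iff)
    have "((\<Prod>i\<in>S. a i) ^ card S) powr (1 / card S) = ((\<Prod>i\<in>S. a i) powr card S) powr (1 / card S)"
      using pos by (simp add: powr_realpow)
    also have "\<dots> = (\<Prod>i\<in>S. a i)"
      using pos c by (simp add: powr_powr)
    finally show ?thesis ..
  next
    case True
    show ?thesis
      unfolding True using \<open>S \<noteq> {}\<close> assms(1) by (simp add: card_gt_0_iff)
  qed
  also have "\<dots> = (\<Prod>i\<in>S. a i ^ card S) powr (1 / card S)"
    by (simp add: prod_power_distrib)
  also have "\<dots> \<le> (\<Sum>i\<in>S. a i ^ card S / card S)"
    using assms False by (intro arith_geom_mean) auto
  also have "\<dots> = (\<Sum>i\<in>S. a i ^ card S) / card S"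
    by (simp add: sum_divide_distrib)
  finally show ?thesis
    using False assms(1) by (simp add: pos_le_divide_eq card_gt_0_iff mult.commute)
qed simp

lemma neg_card_mult_prod_le_weighted_sum:
  fixes x u :: "'a \<Rightarrow> real"
  assumes e: "finite e" and u: "\<And>j. j \<in> e \<Longrightarrow> u j > 0"
  shows "- (real (card e) * (\<Prod>j\<in>e. x j))
       \<le> (\<Sum>i\<in>e. \<bar>x i\<bar> ^ card e / u i ^ card e * (\<Prod>j\<in>e. u j))"
proof -
  have "- (real (card e) * (\<Prod>j\<in>e. x j)) \<le> real (card e) * (\<Prod>j\<in>e. \<bar>x j\<bar>)"
    using mult_left_mono[OF abs_ge_minus_self[of "\<Prod>j\<in>e. x j"], of "real (card e)"]
    by (simp add: abs_prod)
  also have "(\<Prod>j\<in>e. \<bar>x j\<bar>) = (\<Prod>j\<in>e. \<bar>x j\<bar> / u j) * (\<Prod>j\<in>e. u j)"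
    using u by (simp add: prod.distrib[symmetric] less_imp_neq[symmetric] cong: prod.cong)
  also have "real (card e) * ((\<Prod>j\<in>e. \<bar>x j\<bar> / u j) * (\<Prod>j\<in>e. u j))
      \<le> (\<Sum>i\<in>e. (\<bar>x i\<bar> / u i) ^ card e) * (\<Prod>j\<in>e. u j)"
    unfolding mult.assoc[symmetric] using e u
    by (intro mult_right_mono card_mult_prod_le_sum_power prod_nonneg)
      (auto intro: less_imp_le divide_nonneg_pos)
  finally show ?thesis
    by (simp add: sum_distrib_right power_divide)
qed

text \<open>A positive H-eigenvector of the signless Laplacian \<open>D + A\<close> for the eigenvalue \<open>mu\<close>,
  with the eigen-equation at \<open>i\<close> multiplied through by \<open>u i\<close>.\<close>

definition signless_perron_vector :: "nat \<Rightarrow> nat \<Rightarrow> nat set set \<Rightarrow> real \<Rightarrow> (nat \<Rightarrow> real) \<Rightarrow> bool" where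
  "signless_perron_vector n k E mu u \<longleftrightarrow>
     (\<forall>i\<in>{1..n}. 0 < u i \<and> (\<Sum>e | e \<in> E \<and> i \<in> e. \<Prod>j\<in>e. u j) = (mu - real (hdeg E i)) * u i ^ k)"

lemma neg_edge_sum_le_signless_perron:
  assumes E: "uniform_hypergraph n k E" and k: "even k"
    and u: "signless_perron_vector n k E mu u"
  shows "- (real k * (\<Sum>e\<in>E. \<Prod>j\<in>e. x j)) \<le> (\<Sum>i\<in>{1..n}. x i ^ k * (mu - real (hdeg E i)))"
proof -
  have u_pos: "\<And>i. i \<in> {1..n} \<Longrightarrow> u i > 0"
    using u by (simp add: signless_perron_vector_def)
  have "- (real k * (\<Prod>j\<in>e. x j)) \<le> (\<Sum>i\<in>e. \<bar>x i\<bar> ^ k / u i ^ k * (\<Prod>j\<in>e. u j))"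
    if "e \<in> E" for e
  proof -
    note e = uniform_hypergraph_edgeD[OF E that]
    have "\<And>j. j \<in> e \<Longrightarrow> u j > 0"
      using e(1) u_pos by blast
    with e(2,3) show ?thesis
      using neg_card_mult_prod_le_weighted_sum[of e u x] by simp
  qed
  hence "- (real k * (\<Sum>e\<in>E. \<Prod>j\<in>e. x j))
      \<le> (\<Sum>e\<in>E. \<Sum>i\<in>e. \<bar>x i\<bar> ^ k / u i ^ k * (\<Prod>j\<in>e. u j))"
    unfolding sum_distrib_left sum_negf[symmetric] by (rule sum_mono)
  also have "\<dots> = (\<Sum>i\<in>{1..n}. \<bar>x i\<bar> ^ k / u i ^ k * (\<Sum>e | e \<in> E \<and> i \<in> e. \<Prod>j\<in>e. u j))"
    by (simp add: sum_incident_edges_swap[OF E, symmetric] sum_distrib_left)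
  also have "\<dots> = (\<Sum>i\<in>{1..n}. x i ^ k * (mu - real (hdeg E i)))"
  proof (rule sum.cong[OF refl])
    fix i assume i: "i \<in> {1..n}"
    have "(\<Sum>e | e \<in> E \<and> i \<in> e. \<Prod>j\<in>e. u j) = (mu - real (hdeg E i)) * u i ^ k"
      using u i by (simp add: signless_perron_vector_def)
    thus "\<bar>x i\<bar> ^ k / u i ^ k * (\<Sum>e | e \<in> E \<and> i \<in> e. \<Prod>j\<in>e. u j)
        = x i ^ k * (mu - real (hdeg E i))"
      using k u_pos[OF i] by (simp add: power_even_abs)
  qed
  finally show ?thesis .
qed

lemma H_eigenvalue_le_signless_perron:
  assumes E: "uniform_hypergraph n k E" and k: "k \<ge> 2" "even k"
    and u: "signless_perron_vector n k E mu u"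
    and lam: "H_eigenvalue n k (lap_tensor k E) lam"
  shows "lam \<le> mu"
proof -
  obtain x i0 where i0: "i0 \<in> {1..n}" "x i0 \<noteq> 0"
    and eig: "\<And>i. i \<in> {1..n} \<Longrightarrow> tensor_apply n k (lap_tensor k E) x i = lam * x i ^ (k - 1)"
    using lam unfolding H_eigenvalue_def by blast
  let ?d = "\<lambda>i. real (hdeg E i)"
  have "lam * (\<Sum>i\<in>{1..n}. x i ^ k)
      = (\<Sum>i\<in>{1..n}. ?d i * x i ^ k) - real k * (\<Sum>e\<in>E. \<Prod>j\<in>e. x j)"
    using lap_eigenpair_energy[OF E _ eig] k by simp
  also have "\<dots> \<le> (\<Sum>i\<in>{1..n}. ?d i * x i ^ k) + (\<Sum>i\<in>{1..n}. x i ^ k * (mu - ?d i))"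
    using neg_edge_sum_le_signless_perron[OF E k(2) u, of x] by linarith
  also have "\<dots> = mu * (\<Sum>i\<in>{1..n}. x i ^ k)"
    by (simp add: sum.distrib[symmetric] sum_distrib_left algebra_simps)
  finally have "lam * (\<Sum>i\<in>{1..n}. x i ^ k) \<le> mu * (\<Sum>i\<in>{1..n}. x i ^ k)" .
  moreover have "0 < (\<Sum>i\<in>{1..n}. x i ^ k)"
    using i0 k(2) by (intro sum_pos2[of _ i0]) (auto simp: zero_le_even_power zero_less_power_eq)
  ultimately show ?thesis
    by simp
qed

lemma H_eigenvalue_of_signless_perron:
  assumes E: "uniform_hypergraph n k E" and k: "k \<ge> 2" "even k"
    and bip: "odd_bipartite n E"
    and u: "signless_perron_vector n k E mu u"
  shows "H_eigenvalue n k (lap_tensor k E) mu"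
proof -
  obtain V1 V2 where V: "V1 \<noteq> {}" "V1 \<union> V2 = {1..n}" and odd: "\<And>e. e \<in> E \<Longrightarrow> odd (card (e \<inter> V1))"
    using bip unfolding odd_bipartite_def by blast
  define x where "x i = (if i \<in> V1 then - u i else u i)" for i
    \<comment> \<open>every edge meets \<open>V1\<close> an odd number of times, so every edge product changes sign\<close>
  have u_pos: "\<And>i. i \<in> {1..n} \<Longrightarrow> u i > 0"
    using u by (simp add: signless_perron_vector_def)
  have x_edge: "(\<Prod>j\<in>e. x j) = - (\<Prod>j\<in>e. u j)" if "e \<in> E" for e
  proof -
    have "(\<Prod>j\<in>e. x j) = (\<Prod>j\<in>e. (if j \<in> V1 then -1 else 1) * u j)"
      unfolding x_def by (intro prod.cong) auto
    also have "\<dots> = (-1) ^ card (e \<inter> V1) * (\<Prod>j\<in>e. u j)"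
      using uniform_hypergraph_edgeD(3)[OF E that]
      by (simp add: prod.distrib prod.If_cases Int_def)
    finally show ?thesis
      using odd[OF that] by simp
  qed
  have "tensor_apply n k (lap_tensor k E) x i = mu * x i ^ (k - 1)" if i: "i \<in> {1..n}" for i
  proof -
    have xi: "x i \<noteq> 0" "x i ^ k = u i ^ k"
      using u_pos[OF i] k(2) by (auto simp: x_def)
    have "x i * tensor_apply n k (lap_tensor k E) x i
        = real (hdeg E i) * u i ^ k + (\<Sum>e | e \<in> E \<and> i \<in> e. \<Prod>j\<in>e. u j)"
      using mult_tensor_apply_lap_tensor[OF E _ i, of x] k xi x_edge by (simp add: sum_negf)
    also have "\<dots> = x i * (mu * x i ^ (k - 1))"
      using u i xi k by (simp add: signless_perron_vector_def algebra_simps power_eq_if)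
    finally show ?thesis
      using xi(1) by simp
  qed
  moreover obtain i where "i \<in> V1"
    using V(1) by blast
  hence "i \<in> {1..n}"
    using V(2) by blast
  moreover from u_pos[OF this] have "x i \<noteq> 0"
    by (simp add: x_def)
  ultimately show ?thesis
    unfolding H_eigenvalue_def by blast
qed

lemma is_largest_H_eigenvalue_of_signless_perron:
  assumes "uniform_hypergraph n k E" "k \<ge> 2" "even k" "odd_bipartite n E"
    and "signless_perron_vector n k E mu u"
  shows "is_largest_H_eigenvalue n k (lap_tensor k E) mu"
  using assms H_eigenvalue_of_signless_perron H_eigenvalue_le_signless_perron
  unfolding is_largest_H_eigenvalue_def by blast

text \<open>Vertex i_{j,s} of the sunflower is \<open>(j - 1) * k + s\<close> (see \<open>sunflower_edges\<close>):
  \<open>petal k j\<close> is the edge {i_{j,1}, ..., i_{j,k}} with base i_{j,1}, and \<open>center_edge k\<close> is the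
  edge through all bases and i_k = \<open>sunflower_n k\<close>.\<close>

definition petal :: "nat \<Rightarrow> nat \<Rightarrow> nat set" where
  "petal k j = (\<lambda>s. (j - 1) * k + s) ` {1..k}"

definition petal_base :: "nat \<Rightarrow> nat \<Rightarrow> nat" where
  "petal_base k j = (j - 1) * k + 1"

definition center_edge :: "nat \<Rightarrow> nat set" where
  "center_edge k = insert (sunflower_n k) (petal_base k ` {1..k - 1})"

lemma sunflower_edges_eq: "sunflower_edges k = petal k ` {1..k - 1} \<union> {center_edge k}"
  unfolding sunflower_edges_def center_edge_def petal_def petal_base_def by blast

lemma card_petal: "card (petal k j) = k"
  unfolding petal_def by (subst card_image) (auto simp: inj_on_def)

lemma petal_base_in_petal: "k \<ge> 1 \<Longrightarrow> petal_base k j \<in> petal k j"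
  unfolding petal_def petal_base_def by auto

lemma mem_petal_iff:
  assumes "k \<ge> 1" "j \<ge> 1"
  shows "v \<in> petal k j \<longleftrightarrow> v \<ge> 1 \<and> (v - 1) div k + 1 = j"
proof
  assume "v \<in> petal k j"
  then obtain s where "s \<in> {1..k}" "v = (j - 1) * k + s"
    unfolding petal_def by blast
  hence "v \<ge> 1" "v - 1 = (s - 1) + (j - 1) * k" "s - 1 < k"
    by auto
  hence "(v - 1) div k = j - 1"
    using assms by simp
  with \<open>v \<ge> 1\<close> assms show "v \<ge> 1 \<and> (v - 1) div k + 1 = j"
    by simp
next
  assume v: "v \<ge> 1 \<and> (v - 1) div k + 1 = j"
  hence "v = (j - 1) * k + ((v - 1) mod k + 1)"
    by (metis add.commute add_diff_cancel_right' div_mult_mod_eq le_add_diff_inverse2 add.assoc)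
  moreover have "(v - 1) mod k + 1 \<in> {1..k}"
    using assms by (simp add: Suc_leI)
  ultimately show "v \<in> petal k j"
    unfolding petal_def by blast
qed

lemma petal_subset:
  assumes "j \<in> {1..k - 1}"
  shows "petal k j \<subseteq> {1..sunflower_n k - 1}"
proof -
  have "(j - 1) * k + k = j * k"
    using assms by (cases j) auto
  also have "\<dots> \<le> (k - 1) * k"
    using assms by simp
  finally have "(j - 1) * k + k \<le> (k - 1) * k" .
  thus ?thesis
    unfolding petal_def sunflower_n_def by auto
qed

lemma petals_containing:
  assumes k: "k \<ge> 1" and v: "v \<in> {1..sunflower_n k}"
  shows "{j \<in> {1..k - 1}. v \<in> petal k j} = (if v = sunflower_n k then {} else {(v - 1) div k + 1})"
proof (cases "v = sunflower_n k")
  case True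
  thus ?thesis
    using petal_subset by fastforce
next
  case False
  with v have "v - 1 < (k - 1) * k"
    by (auto simp: sunflower_n_def)
  hence "(v - 1) div k + 1 \<in> {1..k - 1}"
    using k by (simp add: div_less_iff_less_mult Suc_leI)
  with False v k show ?thesis
    using mem_petal_iff[OF k] by auto
qed

lemma petal_inter_petal_bases:
  assumes k: "k \<ge> 1" and j: "j \<in> {1..k - 1}"
  shows "petal k j \<inter> petal_base k ` {1..k - 1} = {petal_base k j}"
proof -
  have "j' = j" if "j' \<in> {1..k - 1}" "petal_base k j' \<in> petal k j" for j'
    using that j petal_base_in_petal[OF k, of j'] mem_petal_iff[OF k] by (metis atLeastAtMost_iff)
  thus ?thesis
    using j petal_base_in_petal[OF k] by blast
qed

lemma sunflower_n_notin_petal: "j \<in> {1..k - 1} \<Longrightarrow> sunflower_n k \<notin> petal k j"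
  using petal_subset by fastforce

lemma sunflower_n_notin_petal_bases: "k \<ge> 1 \<Longrightarrow> sunflower_n k \<notin> petal_base k ` {1..k - 1}"
  using sunflower_n_notin_petal petal_base_in_petal by (metis imageE)

lemma inj_on_petal_base: "k \<ge> 1 \<Longrightarrow> inj_on (petal_base k) {1..k - 1}"
  unfolding inj_on_def petal_base_def by auto

lemma card_petal_bases: "k \<ge> 1 \<Longrightarrow> card (petal_base k ` {1..k - 1}) = k - 1"
  using card_image[OF inj_on_petal_base] by simp

lemma petal_bases_subset: "k \<ge> 1 \<Longrightarrow> petal_base k ` {1..k - 1} \<subseteq> {1..sunflower_n k - 1}"
  using petal_subset petal_base_in_petal by blast

lemma uniform_hypergraph_sunflower:
  assumes "k \<ge> 1"
  shows "uniform_hypergraph (sunflower_n k) k (sunflower_edges k)"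
proof -
  have "petal_base k ` {1..k - 1} \<subseteq> {1..sunflower_n k}"
    by (rule order.trans[OF petal_bases_subset[OF assms]]) auto
  hence "center_edge k \<subseteq> {1..sunflower_n k}"
    unfolding center_edge_def by (simp add: sunflower_n_def)
  moreover have "card (center_edge k) = k"
    using assms sunflower_n_notin_petal_bases[OF assms] card_petal_bases[OF assms]
    by (simp add: center_edge_def)
  moreover have "petal k j \<subseteq> {1..sunflower_n k}" if "j \<in> {1..k - 1}" for j
    by (rule order.trans[OF petal_subset[OF that]]) auto
  ultimately show ?thesis
    unfolding uniform_hypergraph_def sunflower_edges_eq by (auto simp: card_petal)
qed

lemma petal_index_mem:
  assumes "k \<ge> 1" "v \<in> {1..sunflower_n k}" "v \<noteq> sunflower_n k"
  shows "(v - 1) div k + 1 \<in> {1..k - 1}"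
proof -
  have "(v - 1) div k + 1 \<in> {j \<in> {1..k - 1}. v \<in> petal k j}"
    unfolding petals_containing[OF assms(1,2)] using assms(3) by simp
  thus ?thesis
    by blast
qed

lemma petal_ne_center_edge: "j \<in> {1..k - 1} \<Longrightarrow> petal k j \<noteq> center_edge k"
  using sunflower_n_notin_petal by (auto simp: center_edge_def)

lemma sunflower_edges_containing:
  assumes k: "k \<ge> 1" and v: "v \<in> {1..sunflower_n k}"
  shows "{e \<in> sunflower_edges k. v \<in> e}
       = (if v = sunflower_n k then {} else {petal k ((v - 1) div k + 1)})
         \<union> (if v = sunflower_n k \<or> v \<in> petal_base k ` {1..k - 1} then {center_edge k} else {})"
proof -
  have "{e \<in> sunflower_edges k. v \<in> e}
      = petal k ` {j \<in> {1..k - 1}. v \<in> petal k j} \<union> {e \<in> {center_edge k}. v \<in> e}"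
    unfolding sunflower_edges_eq by blast
  also have "{e \<in> {center_edge k}. v \<in> e}
      = (if v = sunflower_n k \<or> v \<in> petal_base k ` {1..k - 1} then {center_edge k} else {})"
    by (auto simp: center_edge_def)
  finally show ?thesis
    unfolding petals_containing[OF k v] by simp
qed

lemma sum_sunflower_edges_containing:
  assumes k: "k \<ge> 1" and v: "v \<in> {1..sunflower_n k}"
  shows "(\<Sum>e | e \<in> sunflower_edges k \<and> v \<in> e. g e)
       = (if v = sunflower_n k then 0 else g (petal k ((v - 1) div k + 1)))
         + (if v = sunflower_n k \<or> v \<in> petal_base k ` {1..k - 1} then g (center_edge k) else 0)"
  using sunflower_edges_containing[OF k v] petal_ne_center_edge[OF petal_index_mem[OF k v]]
  by (cases "v = sunflower_n k") auto

lemma hdeg_sunflower: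
  assumes k: "k \<ge> 1" and v: "v \<in> {1..sunflower_n k}"
  shows "hdeg (sunflower_edges k) v = (if v \<in> petal_base k ` {1..k - 1} then 2 else 1)"
proof -
  have "hdeg (sunflower_edges k) v = (\<Sum>e | e \<in> sunflower_edges k \<and> v \<in> e. 1)"
    unfolding hdeg_def by (rule card_eq_sum)
  also have "\<dots> = (if v \<in> petal_base k ` {1..k - 1} then 2 else 1)"
    unfolding sum_sunflower_edges_containing[OF k v] using sunflower_n_notin_petal_bases[OF k]
    by auto
  finally show ?thesis .
qed

lemma odd_bipartite_sunflower:
  assumes k: "k \<ge> 2" "even k"
  shows "odd_bipartite (sunflower_n k) (sunflower_edges k)"
proof -
  let ?B = "petal_base k ` {1..k - 1}"
  have k1: "k \<ge> 1"
    using k by simp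
  have "odd (card (e \<inter> ?B))" if "e \<in> sunflower_edges k" for e
  proof -
    from that consider j where "j \<in> {1..k - 1}" "e = petal k j" | "e = center_edge k"
      unfolding sunflower_edges_eq by blast
    thus ?thesis
    proof cases
      case 1
      thus ?thesis
        using petal_inter_petal_bases[OF k1] by simp
    next
      case 2
      hence "e \<inter> ?B = ?B"
        by (auto simp: center_edge_def)
      thus ?thesis
        using k card_petal_bases[OF k1] by simp
    qed
  qed
  moreover have "?B \<noteq> {}"
    using k by simp
  moreover have "?B \<subseteq> {1..sunflower_n k}"
    by (rule order.trans[OF petal_bases_subset[OF k1]]) auto
  moreover have "sunflower_n k \<in> {1..sunflower_n k} - ?B"
    using sunflower_n_notin_petal_bases[OF k1] by (simp add: sunflower_n_def)
  hence "{1..sunflower_n k} - ?B \<noteq> {}"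
    by blast
  ultimately show ?thesis
    unfolding odd_bipartite_def
    by (intro exI[of _ ?B] exI[of _ "{1..sunflower_n k} - ?B"]) (simp add: Un_absorb1)
qed

lemma prod_petal:
  assumes k: "k \<ge> 1" and j: "j \<in> {1..k - 1}"
    and f: "\<And>v. v \<in> petal k j \<Longrightarrow> v \<notin> petal_base k ` {1..k - 1} \<Longrightarrow> f v = 1"
  shows "(\<Prod>v\<in>petal k j. f v) = f (petal_base k j)"
proof -
  have "(\<Prod>v\<in>petal k j. f v) = f (petal_base k j) * (\<Prod>v\<in>petal k j - {petal_base k j}. f v)"
    using petal_base_in_petal[OF k] by (simp add: prod.remove petal_def)
  also have "(\<Prod>v\<in>petal k j - {petal_base k j}. f v) = 1"
    using f petal_inter_petal_bases[OF k j] by (intro prod.neutral) blast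
  finally show ?thesis
    by simp
qed

lemma prod_center_edge:
  assumes "k \<ge> 1"
  shows "(\<Prod>v\<in>center_edge k. f v) = f (sunflower_n k) * (\<Prod>j=1..k - 1. f (petal_base k j))"
  using assms sunflower_n_notin_petal_bases[OF assms] prod.reindex[OF inj_on_petal_base[OF assms], of f]
  by (simp add: center_edge_def)

definition sunflower_char :: "nat \<Rightarrow> real \<Rightarrow> real" where
  "sunflower_char k mu =
     (mu - 2) - (1 / (mu - 1)) powr (1 / real (k - 1)) - (1 / (mu - 1)) ^ (k - 1)"

definition sunflower_weight :: "nat \<Rightarrow> real \<Rightarrow> nat \<Rightarrow> real" where
  "sunflower_weight k mu v =
     (if v = sunflower_n k then (mu - 1) * (1 / (mu - 1)) powr (1 / real (k - 1))
      else if v \<in> petal_base k ` {1..k - 1} then mu - 1 else 1)"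

lemma sunflower_weight_petal_base:
  assumes "k \<ge> 1" "j \<in> {1..k - 1}"
  shows "sunflower_weight k mu (petal_base k j) = mu - 1"
proof -
  have "petal_base k j \<in> petal_base k ` {1..k - 1}"
    using assms(2) by blast
  with sunflower_n_notin_petal_bases[OF assms(1)] show ?thesis
    by (metis sunflower_weight_def)
qed

lemma prod_sunflower_weight_petal:
  assumes k: "k \<ge> 1" and j: "j \<in> {1..k - 1}"
  shows "(\<Prod>v\<in>petal k j. sunflower_weight k mu v) = mu - 1"
proof -
  have "(\<Prod>v\<in>petal k j. sunflower_weight k mu v) = sunflower_weight k mu (petal_base k j)"
    using sunflower_n_notin_petal[OF j] by (intro prod_petal[OF k j]) (auto simp: sunflower_weight_def)
  thus ?thesis
    using sunflower_weight_petal_base[OF k j] by simp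
qed

lemma prod_sunflower_weight_center_edge:
  assumes "k \<ge> 1"
  shows "(\<Prod>v\<in>center_edge k. sunflower_weight k mu v)
       = sunflower_weight k mu (sunflower_n k) * (mu - 1) ^ (k - 1)"
  unfolding prod_center_edge[OF assms] using sunflower_weight_petal_base[OF assms] by simp

lemma signless_perron_vector_sunflower:
  assumes k: "k \<ge> 2" and mu: "mu > 1" and root: "sunflower_char k mu = 0"
  shows "signless_perron_vector (sunflower_n k) k (sunflower_edges k) mu (sunflower_weight k mu)"
proof -
  define t where "t = mu - 1"
  define s where "s = (1 / t) powr (1 / real (k - 1))"
  obtain m where m: "k = Suc m" "m \<ge> 1"
    using k by (cases k) auto
  let ?n = "sunflower_n k" and ?B = "petal_base k ` {1..k - 1}" and ?u = "sunflower_weight k mu"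
  have k1: "k \<ge> 1"
    using k by simp
  have t: "t > 0" and s: "s > 0"
    using mu by (simp_all add: t_def s_def)
  have s_pow: "t * s ^ m = 1"
    using t m by (simp add: s_def powr_realpow[symmetric] powr_powr)
  have root': "mu - 2 = s + (1 / t) ^ m"
    using root m by (simp add: sunflower_char_def s_def t_def)
  have u: "?u v = (if v = ?n then t * s else if v \<in> ?B then t else 1)" for v
    by (simp add: sunflower_weight_def t_def s_def)
  have petal: "(\<Prod>v\<in>petal k j. ?u v) = t" if "j \<in> {1..k - 1}" for j
    using prod_sunflower_weight_petal[OF k1 that] by (simp add: t_def)
  have "(\<Prod>v\<in>center_edge k. ?u v) = ?u ?n * (mu - 1) ^ (k - 1)"
    by (rule prod_sunflower_weight_center_edge[OF k1])
  also have "?u ?n = t * s"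
    by (simp add: u)
  finally have center: "(\<Prod>v\<in>center_edge k. ?u v) = t * s * t ^ m"
    using m by (simp add: t_def)
  have "(\<Sum>e | e \<in> sunflower_edges k \<and> v \<in> e. \<Prod>j\<in>e. ?u j)
      = (mu - real (hdeg (sunflower_edges k) v)) * ?u v ^ k" if v: "v \<in> {1..?n}" for v
  proof -
    note incident = sum_sunflower_edges_containing[OF k1 v, of "\<lambda>e. \<Prod>j\<in>e. ?u j"]
      and deg = hdeg_sunflower[OF k1 v]
    consider "v = ?n" | "v \<noteq> ?n" "v \<in> ?B" | "v \<noteq> ?n" "v \<notin> ?B"
      by blast
    thus ?thesis
    proof cases
      case 1
      have "t * (t * s) ^ k = t * s * t ^ m * (t * s ^ m)"
        using m by (simp add: power_mult_distrib algebra_simps)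
      hence "t * s * t ^ m = t * (t * s) ^ k"
        unfolding s_pow by (metis mult_1_right)
      with 1 show ?thesis
        using incident deg center sunflower_n_notin_petal_bases[OF k1] by (simp add: u t_def)
    next
      case 2
      have "t + t * s * t ^ m = (s + (1 / t) ^ m) * t ^ k"
        using t m by (simp add: field_simps power_divide)
      with 2 show ?thesis
        using incident deg center petal petal_index_mem[OF k1 v] by (simp add: u root')
    next
      case 3
      thus ?thesis
        using incident deg petal petal_index_mem[OF k1 v] by (simp add: u t_def)
    qed
  qed
  moreover have "?u v > 0" for v
    using t s by (simp add: u)
  ultimately show ?thesis
    unfolding signless_perron_vector_def by blast
qed

lemma sunflower_char_less:
  assumes k: "k \<ge> 2" and ab: "1 < a" "a < b"
  shows "sunflower_char k a < sunflower_char k b"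
proof -
  have lt: "1 / (b - 1) < 1 / (a - 1)"
    using ab by (simp add: frac_less2)
  have "(1 / (b - 1)) powr (1 / real (k - 1)) < (1 / (a - 1)) powr (1 / real (k - 1))"
    using k ab lt by (intro powr_less_mono2) auto
  moreover have "(1 / (b - 1)) ^ (k - 1) < (1 / (a - 1)) ^ (k - 1)"
    using k ab lt by (intro power_strict_mono) auto
  ultimately show ?thesis
    unfolding sunflower_char_def using ab by simp
qed

lemma sunflower_char_unique_root:
  assumes k: "k \<ge> 2"
  shows "\<exists>!mu. 2 < mu \<and> mu < 4 \<and> sunflower_char k mu = 0"
proof (rule ex_ex1I)
  have "(1 / 3 :: real) powr (1 / real (k - 1)) < 1"
    using k powr_less_mono2[of "1 / real (k - 1)" "1 / 3" 1] by simp
  moreover have "(1 / 3 :: real) ^ (k - 1) \<le> 1"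
    by (rule power_le_one) auto
  ultimately have "sunflower_char k 2 < 0" "sunflower_char k 4 > 0"
    unfolding sunflower_char_def by simp_all
  moreover have "continuous_on {2..4} (sunflower_char k)"
    unfolding sunflower_char_def by (intro continuous_intros) auto
  ultimately obtain mu where "2 \<le> mu" "mu \<le> 4" "sunflower_char k mu = 0"
    using IVT'[of "sunflower_char k" 2 0 4] by auto
  moreover from this have "mu \<noteq> 2" "mu \<noteq> 4"
    using \<open>sunflower_char k 2 < 0\<close> \<open>sunflower_char k 4 > 0\<close> by auto
  ultimately show "\<exists>mu. 2 < mu \<and> mu < 4 \<and> sunflower_char k mu = 0"
    by (intro exI[of _ mu]) simp
next
  fix a b assume "2 < a \<and> a < 4 \<and> sunflower_char k a = 0" "2 < b \<and> b < 4 \<and> sunflower_char k b = 0"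
  thus "a = b"
    using sunflower_char_less[OF k, of a b] sunflower_char_less[OF k, of b a] by (cases a b rule: linorder_cases) auto
qed

theorem proposition3p4:
  fixes k :: nat
  assumes "k \<ge> 4" and "even k"
  shows "odd_bipartite (sunflower_n k) (sunflower_edges k) \<and>
    (\<exists>!mu::real. 2 < mu \<and> mu < 4 \<and>
        (mu - 2) - (1 / (mu - 1)) powr (1 / real (k - 1)) - (1 / (mu - 1)) ^ (k - 1) = 0) \<and>
    (\<forall>mu::real. 2 < mu \<and> mu < 4 \<and>
        (mu - 2) - (1 / (mu - 1)) powr (1 / real (k - 1)) - (1 / (mu - 1)) ^ (k - 1) = 0
      \<longrightarrow> is_largest_H_eigenvalue (sunflower_n k) k (lap_tensor k (sunflower_edges k)) mu)"
proof -
  have k: "k \<ge> 2" "even k"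
    using assms by simp_all
  have "is_largest_H_eigenvalue (sunflower_n k) k (lap_tensor k (sunflower_edges k)) mu"
    if "mu > 1" "sunflower_char k mu = 0" for mu
    using uniform_hypergraph_sunflower odd_bipartite_sunflower[OF k]
      signless_perron_vector_sunflower[OF k(1) that] k
    by (intro is_largest_H_eigenvalue_of_signless_perron) auto
  thus ?thesis
    using odd_bipartite_sunflower[OF k] sunflower_char_unique_root[OF k(1)]
    unfolding sunflower_char_def by auto
qed

end
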